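(* Let $X$ be a $k$-step compact nilspace, let $\psi:X\to Y$ and $R:X\to Y'$ be fibrations with $\psi\lesssim R$, let $\phi_k:Z_k(X)\to Z_k(Y)$ be the $k$-th structure morphism of $\psi$, and let $\varphi=\Delta\big(\psi,(R)_{(k-1)}\circ\pi_{k-1,X}\big)$. If $x,y\in X$ satisfy $\varphi(x)=\varphi(y)$, then there is $z\in\ker(\phi_k)$ such that $R(x)=R(y+z)$.
   Context: Compact nilspaces are $k$-step nilspaces with compact metric topology and closed cube sets. $\pi_{k-1,X}:X\to X_{k-1}$ is projection to the $(k-1)$-th characteristic factor; the $k$-th structure group $Z_k(X)$ is a compact abelian group acting freely on $X$ (written $x\mapsto x+z$) whose orbits are the $\pi_{k-1,X}$-fibers. A morphism $\psi$ of $k$-step nilspaces has a $k$-th structure morphism $\phi_k:Z_k(X)\to Z_k(Y)$, a continuous homomorphism with $\psi(x+z)=\psi(x)+\phi_k(z)$. For a morphism $R$, $(R)_{(k-1)}:X_{k-1}\to Y'_{k-1}$ is the morphism with $(R)_{(k-1)}\circ\pi_{k-1,X}=\pi_{k-1,Y'}\circ R$. Fibrations: morphisms mapping each $\pi_n$-fiber onto a $\pi_n$-fiber for all $n$. $\Delta(f,g)(x)=(f(x),g(x))$. $\psi\lesssim R$ means every fiber of $\psi$ is a union of fibers of $R$. *)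

theory Defs
  imports "HOL-Analysis.Analysis"
begin

text \<open>Cubes: a map from the discrete cube {0,1}^n (bool lists of length n) to the space.
  A cube structure assigns to each n the set of n-cubes.\<close>

type_synonym 'a cubes = "nat \<Rightarrow> (bool list \<Rightarrow> 'a) set"

definition vertices :: "nat \<Rightarrow> bool list set" where
  "vertices n = {v. length v = n}"

definition cube_morphism :: "nat \<Rightarrow> nat \<Rightarrow> (bool list \<Rightarrow> bool list) \<Rightarrow> bool" where
  "cube_morphism m n f \<longleftrightarrow> (\<forall>v\<in>vertices m. f v \<in> vertices n) \<and>
     (\<exists>a::nat \<Rightarrow> int. \<exists>B::nat \<Rightarrow> nat \<Rightarrow> int. \<forall>v\<in>vertices m. \<forall>j<n.
        of_bool (f v ! j) = a j + (\<Sum>i<m. B j i * of_bool (v ! i)))"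

definition face0 :: "nat \<Rightarrow> bool list \<Rightarrow> bool list" where
  "face0 i w = take i w @ [False] @ drop i w"

definition is_nilspace :: "'a cubes \<Rightarrow> bool" where
  "is_nilspace C \<longleftrightarrow>
     (\<forall>n c c'. c \<in> C n \<longrightarrow> (\<forall>v\<in>vertices n. c' v = c v) \<longrightarrow> c' \<in> C n) \<and>
     (\<forall>m n f c. cube_morphism m n f \<longrightarrow> c \<in> C n \<longrightarrow> c \<circ> f \<in> C m) \<and>
     (\<forall>c. c \<in> C 1) \<and>
     (\<forall>n\<ge>1. \<forall>c. (\<forall>i<n. c \<circ> face0 i \<in> C (n - 1)) \<longrightarrow>
        (\<exists>c'\<in>C n. \<forall>v\<in>vertices n. v \<noteq> replicate n True \<longrightarrow> c' v = c v))"

definition is_k_step :: "nat \<Rightarrow> 'a cubes \<Rightarrow> bool" where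
  "is_k_step k C \<longleftrightarrow> is_nilspace C \<and>
     (\<forall>c c'. c \<in> C (k+1) \<longrightarrow> c' \<in> C (k+1) \<longrightarrow>
        (\<forall>v\<in>vertices (k+1). v \<noteq> replicate (k+1) True \<longrightarrow> c v = c' v) \<longrightarrow>
        c (replicate (k+1) True) = c' (replicate (k+1) True))"

text \<open>Compact nilspace: compact metric space with closed cube sets (closedness in the
  finite product X^{0,1}^n, expressed sequentially).\<close>
definition is_compact_nilspace :: "('a::metric_space) cubes \<Rightarrow> bool" where
  "is_compact_nilspace C \<longleftrightarrow> is_nilspace C \<and> compact (UNIV :: 'a set) \<and>
     (\<forall>n c s. (\<forall>j. s j \<in> C n) \<longrightarrow> (\<forall>v\<in>vertices n. (\<lambda>j. s j v) \<longlonglongrightarrow> c v) \<longrightarrow> c \<in> C n)"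

definition char_rel :: "'a cubes \<Rightarrow> nat \<Rightarrow> 'a \<Rightarrow> 'a \<Rightarrow> bool" where
  "char_rel C n x y \<longleftrightarrow> (\<exists>c\<in>C (n+1). \<exists>c'\<in>C (n+1).
      c (replicate (n+1) False) = x \<and> c' (replicate (n+1) False) = y \<and>
      (\<forall>v\<in>vertices (n+1). v \<noteq> replicate (n+1) False \<longrightarrow> c v = c' v))"

definition char_proj :: "'a cubes \<Rightarrow> nat \<Rightarrow> 'a \<Rightarrow> 'a set" where
  "char_proj C n x = {y. char_rel C n x y}"

definition nil_morphism :: "('a::topological_space) cubes \<Rightarrow> ('b::topological_space) cubes \<Rightarrow> ('a \<Rightarrow> 'b) \<Rightarrow> bool" where
  "nil_morphism CX CY f \<longleftrightarrow> continuous_on UNIV f \<and> (\<forall>n c. c \<in> CX n \<longrightarrow> f \<circ> c \<in> CY n)"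

definition fibration :: "('a::topological_space) cubes \<Rightarrow> ('b::topological_space) cubes \<Rightarrow> ('a \<Rightarrow> 'b) \<Rightarrow> bool" where
  "fibration CX CY f \<longleftrightarrow> nil_morphism CX CY f \<and>
     (\<forall>n x. f ` char_proj CX n x = char_proj CY n (f x))"

text \<open>The induced map (f)_(n) : X_n \<rightarrow> Y_n on characteristic factors,
  determined by (f)_(n) o pi_n = pi_n o f.\<close>
definition induced_map :: "'a cubes \<Rightarrow> 'b cubes \<Rightarrow> nat \<Rightarrow> ('a \<Rightarrow> 'b) \<Rightarrow> 'a set \<Rightarrow> 'b set" where
  "induced_map CX CY n f \<xi> = char_proj CY n (f (SOME a. char_proj CX n a = \<xi>))"

definition Delta :: "('x \<Rightarrow> 'y) \<Rightarrow> ('x \<Rightarrow> 'z) \<Rightarrow> 'x \<Rightarrow> 'y \<times> 'z" where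
  "Delta f g x = (f x, g x)"

text \<open>The k-th structure group Z_k(X): pairs (x,y) with x ~_(k-1) y, modulo the relation
  (x,y) ~ (x',y') iff the map on {0,1}^k x {0,1} sending (w,0) to y if w = 0 and to x otherwise,
  and (w,1) to y' if w = 0 and to x' otherwise, is a (k+1)-cube.\<close>
definition zpair_rel :: "'a cubes \<Rightarrow> nat \<Rightarrow> 'a \<times> 'a \<Rightarrow> 'a \<times> 'a \<Rightarrow> bool" where
  "zpair_rel C k p q \<longleftrightarrow>
     (\<lambda>v. if v ! k
          then (if \<forall>i<k. \<not> v ! i then snd q else fst q)
          else (if \<forall>i<k. \<not> v ! i then snd p else fst p)) \<in> C (k+1)"

definition struct_pairs :: "'a cubes \<Rightarrow> nat \<Rightarrow> ('a \<times> 'a) set" where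
  "struct_pairs C k = {(x, y). char_rel C (k - 1) x y}"

definition struct_class :: "'a cubes \<Rightarrow> nat \<Rightarrow> 'a \<times> 'a \<Rightarrow> ('a \<times> 'a) set" where
  "struct_class C k p = {q \<in> struct_pairs C k. zpair_rel C k p q}"

definition struct_group :: "'a cubes \<Rightarrow> nat \<Rightarrow> ('a \<times> 'a) set set" where
  "struct_group C k = struct_class C k ` struct_pairs C k"

definition struct_act :: "'a cubes \<Rightarrow> nat \<Rightarrow> ('a \<times> 'a) set \<Rightarrow> 'a \<Rightarrow> 'a" where
  "struct_act C k z x = (THE y. \<exists>p\<in>z. zpair_rel C k p (x, y))"

text \<open>k-th structure morphism phi_k of f: [(a,b)] maps to [(f a, f b)]; its kernel is the set
  of z with phi_k z equal to the zero [(y,y)] of Z_k(Y).\<close>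
definition struct_morphism :: "'a cubes \<Rightarrow> 'b cubes \<Rightarrow> nat \<Rightarrow> ('a \<Rightarrow> 'b) \<Rightarrow> ('a \<times> 'a) set \<Rightarrow> ('b \<times> 'b) set" where
  "struct_morphism CX CY k f z = struct_class CY k (map_prod f f (SOME p. p \<in> z))"

definition struct_kernel :: "'a cubes \<Rightarrow> 'b cubes \<Rightarrow> nat \<Rightarrow> ('a \<Rightarrow> 'b) \<Rightarrow> ('a \<times> 'a) set set" where
  "struct_kernel CX CY k f =
     {z \<in> struct_group CX k. \<exists>y. struct_morphism CX CY k f z = struct_class CY k (y, y)}"

end

theory Submission
  imports Defs
begin

text \<open>Since \<open>R\<close> is a fibration, it maps the \<open>(k-1)\<close>-fibre of \<open>y\<close> onto the \<open>(k-1)\<close>-fibre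
  of \<open>R y\<close>, so equality of the induced classes yields a \<open>y'\<close> in the \<open>(k-1)\<close>-fibre of \<open>y\<close>
  with \<open>R y' = R x\<close>. The class \<open>z\<close> of \<open>(y, y')\<close> in \<open>Z\<^sub>k(X)\<close> translates \<open>y\<close> to \<open>y'\<close>, and
  since \<open>\<psi>\<close> factors through \<open>R\<close>, \<open>\<psi> y' = \<psi> x = \<psi> y\<close>; hence \<open>\<phi>\<^sub>k z = [(\<psi> y, \<psi> y)]\<close>
  is the zero of \<open>Z\<^sub>k(Y)\<close>.

  The work lies in the cube calculus behind \<open>Z\<^sub>k\<close>: the pair relation is an equivalence,
  reflexive on \<open>(k-1)\<close>-related pairs, and on a \<open>k\<close>-step nilspace its classes act by a
  well-defined map. All of this rests on gluing two cubes along a common face, which comes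
  from corner completion in one dimension more.\<close>

section \<open>The discrete cube\<close>

lemma mem_vertices_iff [simp]: "v \<in> vertices n \<longleftrightarrow> length v = n"
  by (simp add: vertices_def)

lemma length_face0 [simp]: "i \<le> length w \<Longrightarrow> length (face0 i w) = Suc (length w)"
  by (simp add: face0_def)

lemma nth_face0:
  "i \<le> length w \<Longrightarrow> p \<le> length w \<Longrightarrow>
   face0 i w ! p = (if p < i then w ! p else if p = i then False else w ! (p - 1))"
  by (auto simp: face0_def nth_append nth_Cons')

lemma nth_face0_self: "i \<le> length w \<Longrightarrow> \<not> face0 i w ! i"
  by (simp add: nth_face0)

lemma face0_at_length: "face0 (length w) w = w @ [False]"
  by (simp add: face0_def)

lemma face0_face0:
  assumes "i < j" "j \<le> Suc (length w)"
  shows "face0 j (face0 i w) = face0 i (face0 (j - 1) w)"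
  by (rule nth_equalityI) (use assms in \<open>auto simp: nth_face0\<close>)

definition del_coord :: "nat \<Rightarrow> bool list \<Rightarrow> bool list" where
  "del_coord j u = take j u @ drop (Suc j) u"

definition del_index :: "nat \<Rightarrow> nat \<Rightarrow> nat" where
  "del_index j i = (if i < j then i else i - 1)"

lemma length_del_coord [simp]: "j < length u \<Longrightarrow> length (del_coord j u) = length u - 1"
  by (simp add: del_coord_def)

lemma face0_del_coord:
  assumes "j < length v" "\<not> v ! j"
  shows "face0 j (del_coord j v) = v"
proof -
  have "face0 j (del_coord j v) = take j v @ v ! j # drop (Suc j) v"
    using assms by (simp add: face0_def del_coord_def)
  also have "\<dots> = v"
    using assms(1) by (rule id_take_nth_drop[symmetric])
  finally show ?thesis .
qed

lemma del_coord_face0: "j \<le> length w \<Longrightarrow> del_coord j (face0 j w) = w"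
  by (simp add: face0_def del_coord_def)

lemma nth_del_coord_del_index:
  "i \<noteq> j \<Longrightarrow> i < length u \<Longrightarrow> j < length u \<Longrightarrow> del_coord j u ! del_index j i = u ! i"
  by (auto simp: del_coord_def del_index_def nth_append min_def)

lemma face0_face0_del_index:
  assumes "i \<noteq> j" "i < length w + 2" "j < length w + 2"
  shows "face0 j (face0 (del_index j i) w) = face0 i (face0 (del_index i j) w)"
  using assms face0_face0[of i j w] face0_face0[of j i w]
  by (cases "i < j") (simp_all add: del_index_def)

lemma inj_on_del_index: "inj_on (del_index j) (- {j})"
  by (auto simp: inj_on_def del_index_def)

lemma del_index_less: "i < n \<Longrightarrow> j < n \<Longrightarrow> i \<noteq> j \<Longrightarrow> del_index j i < n - 1"
  by (auto simp: del_index_def)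

lemma list_update_nth_self: "xs ! i = x \<Longrightarrow> xs[i := x] = xs"
  by (metis list_update_id)

definition patch_face0 :: "nat \<Rightarrow> (bool list \<Rightarrow> 'a) \<Rightarrow> (bool list \<Rightarrow> 'a) \<Rightarrow> bool list \<Rightarrow> 'a" where
  "patch_face0 j g f v = (if v ! j then f v else g (del_coord j v))"

lemma patch_face0_eq:
  assumes "length v = n" "j < n" "i < n" "i \<noteq> j" "\<not> v ! i"
    and "\<And>w. length w = n - 1 \<Longrightarrow> \<not> w ! del_index j i \<Longrightarrow> g w = f (face0 j w)"
  shows "patch_face0 j g f v = f v"
proof (cases "v ! j")
  case False
  have "\<not> del_coord j v ! del_index j i"
    using nth_del_coord_del_index[of i j v] assms(1-5) by simp
  then have "g (del_coord j v) = f (face0 j (del_coord j v))"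
    using assms(1,2,6) by simp
  then show ?thesis
    using False face0_del_coord[of j v] assms(1,2) by (simp add: patch_face0_def)
qed (simp add: patch_face0_def)

section \<open>Cube morphisms\<close>

definition literal_coord :: "nat \<Rightarrow> (bool list \<Rightarrow> bool) \<Rightarrow> bool" where
  "literal_coord m h \<longleftrightarrow>
     (\<exists>b. \<forall>v\<in>vertices m. h v = b) \<or> (\<exists>i<m. \<exists>g. \<forall>v\<in>vertices m. h v = g (v ! i))"

lemma literal_coordI_const: "(\<And>v. length v = m \<Longrightarrow> h v = b) \<Longrightarrow> literal_coord m h"
  by (auto simp: literal_coord_def)

lemma literal_coordI_nth:
  "i < m \<Longrightarrow> (\<And>v. length v = m \<Longrightarrow> h v = g (v ! i)) \<Longrightarrow> literal_coord m h"
  by (auto simp: literal_coord_def)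

lemma literal_coord_affine:
  assumes "literal_coord m h"
  shows "\<exists>a (B :: nat \<Rightarrow> int). \<forall>v\<in>vertices m. of_bool (h v) = a + (\<Sum>i<m. B i * of_bool (v ! i))"
proof -
  consider b where "\<forall>v\<in>vertices m. h v = b"
    | i g where "i < m" "\<forall>v\<in>vertices m. h v = g (v ! i)"
    using assms unfolding literal_coord_def by blast
  then show ?thesis
  proof cases
    case 1
    then show ?thesis by (intro exI[of _ "of_bool b"] exI[of _ "\<lambda>_. 0"]) simp
  next
    case (2 i g)
    define c :: int where "c = of_bool (g True) - of_bool (g False)"
    show ?thesis
    proof (intro exI ballI)
      fix v :: "bool list" assume "v \<in> vertices m"
      have "(\<Sum>i'<m. (if i' = i then c else 0) * of_bool (v ! i'))
          = (\<Sum>i'<m. if i' = i then c * of_bool (v ! i) else 0)"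
        by (rule sum.cong) auto
      also have "\<dots> = c * of_bool (v ! i)"
        using 2(1) by simp
      also have "of_bool (g False) + \<dots> = of_bool (h v)"
        using 2(2) \<open>v \<in> vertices m\<close> by (cases "v ! i") (simp_all add: c_def)
      finally show "of_bool (h v) = of_bool (g False) + (\<Sum>i'<m. (if i' = i then c else 0) * of_bool (v ! i'))"
        by simp
    qed
  qed
qed

lemma cube_morphismI:
  assumes "\<And>v. length v = m \<Longrightarrow> length (f v) = n"
    and "\<And>j. j < n \<Longrightarrow> literal_coord m (\<lambda>v. f v ! j)"
  shows "cube_morphism m n f"
proof -
  have "\<forall>j\<in>{..<n}. \<exists>aB :: int \<times> (nat \<Rightarrow> int).
      \<forall>v\<in>vertices m. of_bool (f v ! j) = fst aB + (\<Sum>i<m. snd aB i * of_bool (v ! i))"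
    using literal_coord_affine[OF assms(2)] by force
  from bchoice[OF this] obtain aB :: "nat \<Rightarrow> int \<times> (nat \<Rightarrow> int)" where
    "\<forall>j\<in>{..<n}. \<forall>v\<in>vertices m.
       of_bool (f v ! j) = fst (aB j) + (\<Sum>i<m. snd (aB j) i * of_bool (v ! i))"
    by blast
  then show ?thesis using assms(1) unfolding cube_morphism_def by auto
qed

lemma cube_morphism_face0: "i \<le> m \<Longrightarrow> cube_morphism m (Suc m) (face0 i)"
proof (rule cube_morphismI)
  fix j assume "i \<le> m" "j < Suc m"
  then consider "j < i" | "j = i" | "i < j" "j - 1 < m" by linarith
  then show "literal_coord m (\<lambda>v. face0 i v ! j)"
  proof cases
    case 1
    then show ?thesis using \<open>i \<le> m\<close> by (intro literal_coordI_nth[of j _ _ id]) (simp_all add: nth_face0)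
  next
    case 2
    then show ?thesis using \<open>i \<le> m\<close> by (intro literal_coordI_const[of _ _ False]) (simp add: nth_face0)
  next
    case 3
    then show ?thesis using \<open>j < Suc m\<close>
      by (intro literal_coordI_nth[of "j - 1" _ _ id]) (simp_all add: nth_face0)
  qed
qed simp

lemma cube_morphism_list_update: "d < n \<Longrightarrow> cube_morphism n n (\<lambda>v. v[d := g (v ! d)])"
proof (rule cube_morphismI)
  fix j assume "d < n" "j < n"
  show "literal_coord n (\<lambda>v. v[d := g (v ! d)] ! j)"
  proof (cases "j = d")
    case True
    then show ?thesis using \<open>d < n\<close> by (intro literal_coordI_nth[of d _ _ g]) simp_all
  next
    case False
    then show ?thesis using \<open>j < n\<close> by (intro literal_coordI_nth[of j _ _ id]) simp_all
  qed
qed simp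

lemma cube_morphism_take: "k \<le> m \<Longrightarrow> cube_morphism m k (take k)"
proof (rule cube_morphismI)
  fix j assume "k \<le> m" "j < k"
  then show "literal_coord m (\<lambda>v. take k v ! j)"
    by (intro literal_coordI_nth[of j _ _ id]) simp_all
qed simp

lemma cube_morphism_snoc: "d < n \<Longrightarrow> cube_morphism n (Suc n) (\<lambda>v. v @ [g (v ! d)])"
proof (rule cube_morphismI)
  fix j assume "d < n" "j < Suc n"
  show "literal_coord n (\<lambda>v. (v @ [g (v ! d)]) ! j)"
  proof (cases "j < n")
    case True
    then show ?thesis by (intro literal_coordI_nth[of j _ _ id]) (simp_all add: nth_append)
  next
    case False
    then show ?thesis using \<open>d < n\<close> \<open>j < Suc n\<close>
      by (intro literal_coordI_nth[of d _ _ g]) (simp_all add: nth_append)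
  qed
qed simp

lemma cube_morphism_move_last: "d < n \<Longrightarrow> cube_morphism (Suc n) n (\<lambda>u. (take n u)[d := u ! n])"
proof (rule cube_morphismI)
  fix j assume "d < n" "j < n"
  show "literal_coord (Suc n) (\<lambda>u. (take n u)[d := u ! n] ! j)"
  proof (cases "j = d")
    case True
    then show ?thesis using \<open>d < n\<close> by (intro literal_coordI_nth[of n _ _ id]) simp_all
  next
    case False
    then show ?thesis using \<open>j < n\<close> by (intro literal_coordI_nth[of j _ _ id]) simp_all
  qed
qed simp

lemma cube_morphism_negate_prefix:
  "cube_morphism (Suc k) (Suc k) (\<lambda>v. map Not (take k v) @ [v ! k])"
proof (rule cube_morphismI)
  fix j assume "j < Suc k"
  show "literal_coord (Suc k) (\<lambda>v. (map Not (take k v) @ [v ! k]) ! j)"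
  proof (cases "j < k")
    case True
    then show ?thesis by (intro literal_coordI_nth[of j _ _ Not]) (simp_all add: nth_append)
  next
    case False
    then show ?thesis using \<open>j < Suc k\<close> by (intro literal_coordI_nth[of k _ _ id]) (simp_all add: nth_append)
  qed
qed simp

section \<open>Gluing cubes in a nilspace\<close>

locale nilspace =
  fixes C :: "'a cubes"
  assumes is_nilspace: "is_nilspace C"
begin

lemma cube_cong:
  assumes "c \<in> C n" "\<And>v. length v = n \<Longrightarrow> c' v = c v"
  shows "c' \<in> C n"
proof -
  have "\<forall>n c c'. c \<in> C n \<longrightarrow> (\<forall>v\<in>vertices n. c' v = c v) \<longrightarrow> c' \<in> C n"
    using is_nilspace unfolding is_nilspace_def by (elim conjE)
  moreover have "\<forall>v\<in>vertices n. c' v = c v"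
    using assms(2) by simp
  ultimately show ?thesis
    using assms(1) by blast
qed

lemma cube_comp: "c \<in> C n \<Longrightarrow> cube_morphism m n f \<Longrightarrow> c \<circ> f \<in> C m"
  using is_nilspace unfolding is_nilspace_def by (elim conjE) blast

lemma cube_compI:
  assumes "c \<in> C n" "cube_morphism m n f" "\<And>v. length v = m \<Longrightarrow> g v = c (f v)"
  shows "g \<in> C m"
  using cube_comp[OF assms(1,2)] by (rule cube_cong) (simp add: assms(3))

lemma cube_dim1: "c \<in> C 1"
  using is_nilspace unfolding is_nilspace_def by (elim conjE) blast

lemma cube_const: "(\<lambda>_. x) \<in> C n"
proof (rule cube_compI[OF cube_dim1])
  show "cube_morphism n 1 (\<lambda>_. [False])"
  proof (rule cube_morphismI)
    fix j :: nat assume "j < 1"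
    then show "literal_coord n (\<lambda>v. [False] ! j)"
      by (intro literal_coordI_const[of _ _ False]) simp
  qed simp
qed simp

lemma cube_lower_face: "c \<in> C n \<Longrightarrow> i < n \<Longrightarrow> c \<circ> face0 i \<in> C (n - 1)"
  using cube_comp cube_morphism_face0[of i "n - 1"] by simp

lemma corner_completion:
  assumes "0 < n" "\<And>i. i < n \<Longrightarrow> c \<circ> face0 i \<in> C (n - 1)"
  shows "\<exists>c'\<in>C n. \<forall>v. length v = n \<longrightarrow> v \<noteq> replicate n True \<longrightarrow> c' v = c v"
proof -
  have "\<forall>n\<ge>1. \<forall>c. (\<forall>i<n. c \<circ> face0 i \<in> C (n - 1)) \<longrightarrow>
      (\<exists>c'\<in>C n. \<forall>v\<in>vertices n. v \<noteq> replicate n True \<longrightarrow> c' v = c v)"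
    using is_nilspace unfolding is_nilspace_def by (elim conjE)
  from this[rule_format, of n c] show ?thesis
    using assms by (auto simp: Ball_def)
qed

lemma cube_extension_from_all_lower_faces:
  assumes "\<And>i. i < n \<Longrightarrow> f \<circ> face0 i \<in> C (n - 1)"
  shows "\<exists>c\<in>C n. \<forall>v. length v = n \<longrightarrow> (\<exists>i<n. \<not> v ! i) \<longrightarrow> c v = f v"
proof (cases "n = 0")
  case True
  then show ?thesis
    using cube_const by auto
next
  case False
  then obtain c where "c \<in> C n" "\<forall>v. length v = n \<longrightarrow> v \<noteq> replicate n True \<longrightarrow> c v = f v"
    using corner_completion[of n f] assms by auto
  moreover have "v \<noteq> replicate n True" if "i < n" "\<not> v ! i" for v i
    using that by auto
  ultimately show ?thesis
    by blast
qed

lemma cube_lower_face_lower_face: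
  assumes "f \<circ> face0 i \<in> C (n - 1)" "i < n" "j < n" "i \<noteq> j"
  shows "f \<circ> face0 j \<circ> face0 (del_index j i) \<in> C (n - 1 - 1)"
proof (rule cube_cong[OF cube_lower_face[OF assms(1)]])
  show "del_index i j < n - 1"
    using assms(2-4) by (intro del_index_less) auto
  fix w :: "bool list" assume "length w = n - 1 - 1"
  then show "(f \<circ> face0 j \<circ> face0 (del_index j i)) w = (f \<circ> face0 i \<circ> face0 (del_index i j)) w"
    using assms(2-4) face0_face0_del_index[of i j w] by simp
qed

lemma lower_face0_patch_face0:
  assumes "I \<subseteq> {..<n}" "j < n"
    and faces: "\<And>i. i \<in> I \<Longrightarrow> f \<circ> face0 i \<in> C (n - 1)"
    and g: "g \<in> C (n - 1)"
    and g_eq: "\<And>w i. length w = n - 1 \<Longrightarrow> i \<in> I \<Longrightarrow> \<not> w ! del_index j i \<Longrightarrow> g w = f (face0 j w)"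
    and "i \<in> insert j I"
  shows "patch_face0 j g f \<circ> face0 i \<in> C (n - 1)"
proof (cases "i = j")
  case True
  show ?thesis
    by (rule cube_cong[OF g])
      (use True assms(2) in \<open>simp add: patch_face0_def nth_face0_self del_coord_face0\<close>)
next
  case False
  then have "i \<in> I" "i < n"
    using assms(1,6) by auto
  show ?thesis
  proof (rule cube_cong[OF faces[OF \<open>i \<in> I\<close>]])
    fix w :: "bool list" assume "length w = n - 1"
    then show "(patch_face0 j g f \<circ> face0 i) w = (f \<circ> face0 i) w"
      using patch_face0_eq[of "face0 i w" n j i g f] g_eq[OF _ \<open>i \<in> I\<close>] \<open>i < n\<close> assms(2) False
      by (simp add: nth_face0_self)
  qed
qed

text \<open>Induction on the number of missing lower faces: a missing face \<open>j\<close> is itself completed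
  in dimension \<open>n - 1\<close> and patched in; once all lower faces are present, the corner
  completion axiom applies.\<close>

lemma cube_extension_from_lower_faces:
  assumes "I \<subseteq> {..<n}" and "\<And>i. i \<in> I \<Longrightarrow> f \<circ> face0 i \<in> C (n - 1)"
  shows "\<exists>c\<in>C n. \<forall>v. length v = n \<longrightarrow> (\<exists>i\<in>I. \<not> v ! i) \<longrightarrow> c v = f v"
  using assms
proof (induction "n - card I" arbitrary: n I f rule: less_induct)
  case less
  show ?case
  proof (cases "I = {..<n}")
    case True
    then show ?thesis
      using cube_extension_from_all_lower_faces[of n f] less.prems(2) by auto
  next
    case False
    then obtain j where j: "j < n" "j \<notin> I"
      using less.prems(1) by auto
    have "card I < n"
      using psubset_card_mono[of "{..<n}" I] less.prems(1) False by auto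
    define I' where "I' = del_index j ` I"
    have "inj_on (del_index j) I"
      using inj_on_subset[OF inj_on_del_index[of j], of I] j(2) by blast
    then have "n - 1 - card I' < n - card I"
      using \<open>card I < n\<close> by (simp add: I'_def card_image)
    moreover have "I' \<subseteq> {..<n - 1}"
      using less.prems(1) j del_index_less unfolding I'_def by blast
    moreover have "f \<circ> face0 j \<circ> face0 i' \<in> C (n - 1 - 1)" if "i' \<in> I'" for i'
      using that less.prems j cube_lower_face_lower_face unfolding I'_def by blast
    ultimately obtain g where g: "g \<in> C (n - 1)"
      "\<forall>w. length w = n - 1 \<longrightarrow> (\<exists>i\<in>I'. \<not> w ! i) \<longrightarrow> g w = f (face0 j w)"
      using less.hyps[of "n - 1" I' "f \<circ> face0 j"] by auto
    then have g_eq: "g w = f (face0 j w)"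
      if "length w = n - 1" "i \<in> I" "\<not> w ! del_index j i" for w i
      using that unfolding I'_def by blast
    have "n - card (insert j I) < n - card I"
      using j \<open>card I < n\<close> finite_subset[OF less.prems(1)] by simp
    then obtain c where "c \<in> C n"
      "\<forall>v. length v = n \<longrightarrow> (\<exists>i\<in>insert j I. \<not> v ! i) \<longrightarrow> c v = patch_face0 j g f v"
      using less.hyps[of n "insert j I" "patch_face0 j g f"] less.prems j g(1) g_eq
        lower_face0_patch_face0 by auto
    moreover have "patch_face0 j g f v = f v" if "length v = n" "i \<in> I" "\<not> v ! i" for v i
      using patch_face0_eq[OF that(1) j(1) _ _ that(3)] that(2) j(2) less.prems(1) g_eq[OF _ that(2)]
      by auto
    ultimately show ?thesis
      by (metis insertCI)
  qed
qed

text \<open>\<open>F2\<close> and \<open>F1\<close> (with the last coordinate moved into slot \<open>d\<close>) are the lower faces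
  \<open>n\<close> and \<open>d\<close> of an \<open>(n+1)\<close>-dimensional map; its completion, restricted to the vertices with
  \<open>u ! n = (\<not> u ! d)\<close>, is the glued cube.\<close>

lemma cube_glue_lower:
  assumes "F1 \<in> C n" "F2 \<in> C n" "d < n"
    and "\<And>v. length v = n \<Longrightarrow> \<not> v ! d \<Longrightarrow> F1 v = F2 v"
  shows "(\<lambda>v. if v ! d then F2 v else F1 (v[d := True])) \<in> C n"
proof -
  define move where "move = (\<lambda>u :: bool list. (take n u)[d := u ! n])"
  define f where "f u = (if u ! d then F2 (take n u) else F1 (move u))" for u
  have "f \<circ> face0 d \<in> C n"
  proof (rule cube_cong)
    show "F1 \<circ> move \<circ> face0 d \<in> C n"
      using cube_lower_face[OF cube_comp[OF assms(1) cube_morphism_move_last[OF assms(3)]], of d]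
        assms(3) by (simp add: move_def)
  qed (use assms(3) in \<open>simp add: f_def nth_face0_self\<close>)
  moreover have "f \<circ> face0 n \<in> C n"
  proof (rule cube_cong[OF assms(2)])
    fix w :: "bool list" assume "length w = n"
    then show "(f \<circ> face0 n) w = F2 w"
      using assms(3) assms(4)[of w] face0_at_length[of w]
      by (auto simp: f_def move_def nth_append list_update_nth_self)
  qed
  ultimately obtain W where W: "W \<in> C (Suc n)"
    "\<forall>u. length u = Suc n \<longrightarrow> (\<exists>i\<in>{d, n}. \<not> u ! i) \<longrightarrow> W u = f u"
    using cube_extension_from_lower_faces[of "{d, n}" "Suc n" f] assms(3) by auto
  show ?thesis
  proof (rule cube_compI[OF W(1) cube_morphism_snoc[OF assms(3), of Not]])
    fix v :: "bool list" assume "length v = n"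
    then show "(if v ! d then F2 v else F1 (v[d := True])) = W (v @ [\<not> v ! d])"
      using W(2)[rule_format, of "v @ [\<not> v ! d]"] assms(3)
      by (auto simp: f_def move_def nth_append)
  qed
qed

lemma cube_glue:
  assumes "F1 \<in> C n" "F2 \<in> C n" "d < n"
    and "\<And>v. length v = n \<Longrightarrow> v ! d = b \<Longrightarrow> F1 v = F2 v"
  shows "(\<lambda>v. if v ! d = b then F1 (v[d := \<not> b]) else F2 v) \<in> C n"
proof -
  define \<phi> where "\<phi> v = v[d := (v ! d \<noteq> b)]" for v
  have \<phi>: "cube_morphism n n \<phi>"
    unfolding \<phi>_def using assms(3) by (rule cube_morphism_list_update)
  have "(\<lambda>v. if v ! d then (F2 \<circ> \<phi>) v else (F1 \<circ> \<phi>) (v[d := True])) \<in> C n"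
    by (rule cube_glue_lower[OF cube_comp[OF assms(1) \<phi>] cube_comp[OF assms(2) \<phi>] assms(3)])
      (use assms(3,4) in \<open>simp add: \<phi>_def\<close>)
  then show ?thesis
  proof (rule cube_compI[OF _ \<phi>])
    fix v :: "bool list" assume "length v = n"
    then show "(if v ! d = b then F1 (v[d := \<not> b]) else F2 v) =
        (\<lambda>v. if v ! d then (F2 \<circ> \<phi>) v else (F1 \<circ> \<phi>) (v[d := True])) (\<phi> v)"
      using assms(3) by (auto simp: \<phi>_def list_update_nth_self)
  qed
qed

lemma pointed_cube_flip:
  assumes "(\<lambda>v. if v = u then a else c) \<in> C n" "length u = n" "j < n" "u ! j = (\<not> b)"
  shows "(\<lambda>v. if v = u[j := b] then a else c) \<in> C n"
proof -
  have "(\<lambda>v. if v ! j = b then (if v[j := \<not> b] = u then a else c) else c) \<in> C n"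
    by (rule cube_glue[OF assms(1) cube_const assms(3)]) (use assms(4) in auto)
  then show ?thesis
  proof (rule cube_cong)
    fix v :: "bool list" assume "length v = n"
    have "v[j := \<not> b] = u \<longleftrightarrow> v = u[j := b]" if "v ! j = b"
    proof
      assume "v[j := \<not> b] = u"
      then have "v[j := \<not> b, j := b] = u[j := b]"
        by simp
      then show "v = u[j := b]"
        using that by (simp add: list_update_nth_self)
    qed (use assms(4) in \<open>simp add: list_update_nth_self\<close>)
    moreover have "u[j := b] ! j = b"
      using assms(2,3) by simp
    ultimately show "(if v = u[j := b] then a else c) =
        (if v ! j = b then (if v[j := \<not> b] = u then a else c) else c)"
      by auto
  qed
qed

lemma single_vertex_difference_freeze:
  assumes "e \<in> C n" "e' \<in> C n" "length v0 = n" "j < n"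
    and "\<And>v. length v = n \<Longrightarrow> v \<noteq> v0 \<Longrightarrow> e' v = e v"
  shows "\<exists>D\<in>C n. D (v0[j := \<not> v0 ! j]) = e' v0 \<and>
    (\<forall>v. length v = n \<longrightarrow> v \<noteq> v0[j := \<not> v0 ! j] \<longrightarrow> D v = e (v[j := v0 ! j]))"
proof -
  define b where "b = v0 ! j"
  define D where "D = (\<lambda>v. if v ! j = (\<not> b) then e' (v[j := b]) else e v)"
  have "D \<in> C n"
    using cube_glue[OF assms(2,1,4), of "\<not> b"] assms(5) by (simp add: D_def b_def) (metis)
  moreover have "D (v0[j := \<not> b]) = e' v0"
    using assms(3,4) by (simp add: D_def b_def)
  moreover have "D v = e (v[j := b])" if "length v = n" "v \<noteq> v0[j := \<not> b]" for v
  proof (cases "v ! j = b")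
    case False
    then have "v[j := b] \<noteq> v0"
      using that(2) list_update_nth_self[of v j "\<not> b"] by auto
    then show ?thesis
      using False that(1) assms(5) by (simp add: D_def)
  qed (simp add: D_def list_update_nth_self)
  ultimately show ?thesis
    unfolding b_def by blast
qed

text \<open>Induction on \<open>n - j\<close>, where \<open>e\<close> depends only on the coordinates from \<open>j\<close> on: freezing
  coordinate \<open>j\<close> moves the exceptional vertex to \<open>v0[j := \<not> v0 ! j]\<close>, and
  \<open>pointed_cube_flip\<close> moves it back.\<close>

lemma cube_of_single_vertex_difference_drop:
  assumes "e \<in> C n" "e' \<in> C n" "length v0 = n"
    and "\<And>v. length v = n \<Longrightarrow> v \<noteq> v0 \<Longrightarrow> e' v = e v"
    and "\<And>v w. length v = n \<Longrightarrow> length w = n \<Longrightarrow> drop j v = drop j w \<Longrightarrow> e v = e w"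
  shows "(\<lambda>v. if v = v0 then e' v0 else e v0) \<in> C n"
  using assms
proof (induction "n - j" arbitrary: j e e' v0)
  case 0
  show ?case
  proof (rule cube_cong[OF "0.prems"(2)])
    fix v :: "bool list" assume "length v = n"
    moreover have "e v = e v0"
      using "0.prems"(5)[OF \<open>length v = n\<close> "0.prems"(3)] "0.hyps" \<open>length v = n\<close> "0.prems"(3)
      by simp
    ultimately show "(if v = v0 then e' v0 else e v0) = e' v"
      using "0.prems"(4)[of v] by auto
  qed
next
  case (Suc m)
  have j: "j < n"
    using Suc.hyps(2) by simp
  define b where "b = v0 ! j"
  define v1 where "v1 = v0[j := \<not> b]"
  define E where "E = (\<lambda>v. e (v[j := b]))"
  obtain D where "D \<in> C n" "D v1 = e' v0" "\<And>v. length v = n \<Longrightarrow> v \<noteq> v1 \<Longrightarrow> D v = E v"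
    using single_vertex_difference_freeze[OF Suc.prems(1-3) j Suc.prems(4)]
    unfolding b_def v1_def E_def by blast
  moreover have "E \<in> C n"
    by (rule cube_compI[OF Suc.prems(1) cube_morphism_list_update[OF j, of "\<lambda>_. b"]])
      (simp add: E_def)
  moreover have "E v = E w"
    if "length v = n" "length w = n" "drop (Suc j) v = drop (Suc j) w" for v w
  proof -
    have "drop j (v[j := b]) = drop j (w[j := b])"
      using that j by (simp add: Cons_nth_drop_Suc[symmetric] drop_update_cancel)
    then show ?thesis
      using that Suc.prems(5)[of "v[j := b]" "w[j := b]"] by (simp add: E_def)
  qed
  moreover have "n - Suc j = m" "length v1 = n"
    using Suc.hyps(2) Suc.prems(3) by (simp_all add: v1_def)
  ultimately have "(\<lambda>v. if v = v1 then D v1 else E v1) \<in> C n"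
    using Suc.hyps(1)[of "Suc j" E D v1] by blast
  moreover have "E v1 = e v0"
    using j Suc.prems(3) by (simp add: E_def v1_def b_def)
  ultimately have "(\<lambda>v. if v = v1 then e' v0 else e v0) \<in> C n"
    using \<open>D v1 = e' v0\<close> by (simp only:)
  moreover have "v1 ! j = (\<not> b)" "v1[j := b] = v0"
    using j Suc.prems(3) by (simp_all add: v1_def b_def)
  ultimately show ?case
    using pointed_cube_flip[of v1 "e' v0" "e v0" n j b] \<open>length v1 = n\<close> j by simp
qed

lemma cube_of_single_vertex_difference:
  assumes "c \<in> C n" "c' \<in> C n" "length v0 = n"
    and "\<And>v. length v = n \<Longrightarrow> v \<noteq> v0 \<Longrightarrow> c' v = c v"
  shows "(\<lambda>v. if v = v0 then c' v0 else c v0) \<in> C n"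
proof (rule cube_of_single_vertex_difference_drop[OF assms])
  fix v w :: "bool list"
  assume "drop 0 v = drop 0 w"
  then show "c v = c w" by simp
qed

end

section \<open>The structure group\<close>

definition pair_cube :: "nat \<Rightarrow> 'a \<times> 'a \<Rightarrow> 'a \<times> 'a \<Rightarrow> bool list \<Rightarrow> 'a" where
  "pair_cube k p q = (\<lambda>v. if v ! k
     then (if \<forall>i<k. \<not> v ! i then snd q else fst q)
     else (if \<forall>i<k. \<not> v ! i then snd p else fst p))"

lemma zpair_rel_iff_pair_cube: "zpair_rel C k p q \<longleftrightarrow> pair_cube k p q \<in> C (k + 1)"
  by (simp add: zpair_rel_def pair_cube_def)

lemma comp_pair_cube: "f \<circ> pair_cube k p q = pair_cube k (map_prod f f p) (map_prod f f q)"
  by (auto simp: pair_cube_def fun_eq_iff)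

lemma zpair_rel_map:
  "nil_morphism CX CY f \<Longrightarrow> zpair_rel CX k p q \<Longrightarrow> zpair_rel CY k (map_prod f f p) (map_prod f f q)"
  unfolding nil_morphism_def zpair_rel_iff_pair_cube by (metis comp_pair_cube)

context nilspace
begin

lemma zpair_rel_sym:
  assumes "zpair_rel C k p q"
  shows "zpair_rel C k q p"
  unfolding zpair_rel_iff_pair_cube
proof (rule cube_compI[OF assms[unfolded zpair_rel_iff_pair_cube] cube_morphism_list_update])
  fix v :: "bool list" assume "length v = k + 1"
  then show "pair_cube k q p v = pair_cube k p q (v[k := \<not> v ! k])"
    by (simp add: pair_cube_def)
qed simp

lemma zpair_rel_trans:
  assumes "zpair_rel C k a b" "zpair_rel C k b c"
  shows "zpair_rel C k a c"
proof -
  have "(\<lambda>v. if v ! k = False then pair_cube k b a (v[k := \<not> False]) else pair_cube k b c v)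
      \<in> C (k + 1)"
    using zpair_rel_sym[OF assms(1)] assms(2) unfolding zpair_rel_iff_pair_cube
    by (rule cube_glue) (auto simp: pair_cube_def)
  then show ?thesis
    unfolding zpair_rel_iff_pair_cube by (rule cube_cong) (auto simp: pair_cube_def)
qed

text \<open>Negating the first \<open>k\<close> coordinates moves the vertex carrying \<open>w\<close> to the top corner,
  which in a \<open>k\<close>-step nilspace is determined by the other vertices.\<close>

lemma zpair_rel_unique:
  assumes "is_k_step k C" "zpair_rel C k p (y, w1)" "zpair_rel C k p (y, w2)"
  shows "w1 = w2"
proof -
  define \<rho> where "\<rho> = (\<lambda>v. map Not (take k v) @ [v ! k])"
  define top where "top = replicate (k + 1) True"
  have \<rho>: "cube_morphism (k + 1) (k + 1) \<rho>"
    unfolding \<rho>_def using cube_morphism_negate_prefix by simp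
  have eval: "(pair_cube k p (y, w) \<circ> \<rho>) v =
      (if v ! k then (if \<forall>i<k. v ! i then w else y) else (if \<forall>i<k. v ! i then snd p else fst p))"
    if "length v = k + 1" for v w
    using that by (auto simp: \<rho>_def pair_cube_def nth_append)
  have top_iff: "v = top \<longleftrightarrow> v ! k \<and> (\<forall>i<k. v ! i)" if "length v = k + 1" for v
    using that by (auto simp: top_def list_eq_iff_nth_eq less_Suc_eq simp del: replicate_Suc)
  have k_step: "c top = c' top"
    if "c \<in> C (k + 1)" "c' \<in> C (k + 1)" "\<And>v. length v = k + 1 \<Longrightarrow> v \<noteq> top \<Longrightarrow> c v = c' v"
    for c c'
  proof -
    have "\<forall>v\<in>vertices (k + 1). v \<noteq> replicate (k + 1) True \<longrightarrow> c v = c' v"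
      using that(3) by (simp add: top_def)
    then show ?thesis
      using assms(1) that(1,2) unfolding is_k_step_def top_def by blast
  qed
  have "(pair_cube k p (y, w1) \<circ> \<rho>) top = (pair_cube k p (y, w2) \<circ> \<rho>) top"
  proof (rule k_step)
    show "pair_cube k p (y, w1) \<circ> \<rho> \<in> C (k + 1)" "pair_cube k p (y, w2) \<circ> \<rho> \<in> C (k + 1)"
      using assms(2,3) \<rho> by (simp_all add: zpair_rel_iff_pair_cube cube_comp)
    fix v :: "bool list" assume "length v = k + 1" "v \<noteq> top"
    then show "(pair_cube k p (y, w1) \<circ> \<rho>) v = (pair_cube k p (y, w2) \<circ> \<rho>) v"
      using eval[of v w1] eval[of v w2] top_iff[of v] by auto
  qed
  then show ?thesis
    using eval[of top] top_iff[of top] by (simp add: top_def)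
qed

lemma char_rel_refl: "char_rel C n x x"
  unfolding char_rel_def by (intro bexI[of _ "\<lambda>_. x"]) (simp_all add: cube_const)

lemma zpair_rel_refl:
  assumes "char_rel C (k - 1) y y'"
  shows "zpair_rel C k (y, y') (y, y')"
proof (cases "k = 0")
  case True
  then show ?thesis
    using cube_dim1 by (simp add: zpair_rel_iff_pair_cube)
next
  case False
  then obtain c c' where cubes: "c \<in> C k" "c' \<in> C k"
    and at_zero: "c (replicate k False) = y" "c' (replicate k False) = y'"
    and agree: "\<forall>v\<in>vertices k. v \<noteq> replicate k False \<longrightarrow> c v = c' v"
    using assms unfolding char_rel_def by auto
  have "(\<lambda>v. if v = replicate k False then y' else y) \<in> C k"
    using cube_of_single_vertex_difference[OF cubes(1,2), of "replicate k False"] agree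
    unfolding at_zero[symmetric] by (auto simp: Ball_def)
  then show ?thesis
    unfolding zpair_rel_iff_pair_cube
  proof (rule cube_compI[OF _ cube_morphism_take])
    fix v :: "bool list" assume "length v = k + 1"
    then have "take k v = replicate k False \<longleftrightarrow> (\<forall>i<k. \<not> v ! i)"
      by (auto simp: list_eq_iff_nth_eq)
    then show "pair_cube k (y, y') (y, y') v = (if take k v = replicate k False then y' else y)"
      by (auto simp: pair_cube_def)
  qed simp
qed

lemma struct_class_eq: "zpair_rel C k p q \<Longrightarrow> struct_class C k p = struct_class C k q"
  unfolding struct_class_def by (blast intro: zpair_rel_trans zpair_rel_sym)

lemma mem_struct_class_self: "char_rel C (k - 1) y y' \<Longrightarrow> (y, y') \<in> struct_class C k (y, y')"
  by (simp add: struct_class_def struct_pairs_def zpair_rel_refl)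

lemma struct_act_class:
  assumes "is_k_step k C" "char_rel C (k - 1) y y'"
  shows "struct_act C k (struct_class C k (y, y')) y = y'"
  unfolding struct_act_def
proof (rule the_equality)
  show "\<exists>p\<in>struct_class C k (y, y'). zpair_rel C k p (y, y')"
    using assms(2) mem_struct_class_self zpair_rel_refl by blast
next
  fix w assume "\<exists>p\<in>struct_class C k (y, y'). zpair_rel C k p (y, w)"
  then obtain p where "zpair_rel C k (y, y') p" "zpair_rel C k p (y, w)"
    by (auto simp: struct_class_def)
  then show "w = y'"
    using zpair_rel_unique[OF assms(1)] zpair_rel_sym by blast
qed

end

lemma struct_morphism_class:
  assumes "nilspace CX" "nilspace CY" "nil_morphism CX CY f" "char_rel CX (k - 1) y y'"
  shows "struct_morphism CX CY k f (struct_class CX k (y, y')) = struct_class CY k (f y, f y')"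
proof -
  define p where "p = (SOME p. p \<in> struct_class CX k (y, y'))"
  have "p \<in> struct_class CX k (y, y')"
    unfolding p_def using nilspace.mem_struct_class_self[OF assms(1,4)] by (rule someI)
  then have "zpair_rel CX k (y, y') p"
    by (simp add: struct_class_def)
  then have "zpair_rel CY k (f y, f y') (map_prod f f p)"
    using zpair_rel_map[OF assms(3)] by fastforce
  then show ?thesis
    unfolding struct_morphism_def p_def[symmetric] using nilspace.struct_class_eq[OF assms(2)] by metis
qed

lemma induced_map_char_proj:
  assumes "fibration CX CY f"
  shows "induced_map CX CY m f (char_proj CX m a) = f ` char_proj CX m a"
proof -
  define a' where "a' = (SOME a'. char_proj CX m a' = char_proj CX m a)"
  have "char_proj CX m a' = char_proj CX m a"
    unfolding a'_def by (rule someI) (rule refl)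
  then show ?thesis
    using assms unfolding fibration_def induced_map_def a'_def[symmetric] by metis
qed

lemma struct_class_mem_struct_kernel:
  assumes "nilspace CX" "nilspace CY" "nil_morphism CX CY f" "char_rel CX (k - 1) y y'"
    and "f y' = f y"
  shows "struct_class CX k (y, y') \<in> struct_kernel CX CY k f"
  using struct_morphism_class[OF assms(1-4)] assms(4,5)
  by (auto simp: struct_kernel_def struct_group_def struct_pairs_def)

lemma char_rel_of_induced_map_eq:
  assumes "nilspace CX" "fibration CX CY f"
    and "induced_map CX CY m f (char_proj CX m x) = induced_map CX CY m f (char_proj CX m y)"
  obtains y' where "char_rel CX m y y'" "f y' = f x"
proof -
  have "f x \<in> f ` char_proj CX m x"
    using nilspace.char_rel_refl[OF assms(1)] by (simp add: char_proj_def)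
  also have "\<dots> = f ` char_proj CX m y"
    using assms(3) induced_map_char_proj[OF assms(2)] by simp
  finally show ?thesis
    using that by (auto simp: char_proj_def)
qed

lemma nilspace_if_compact_nilspace: "is_compact_nilspace C \<Longrightarrow> nilspace C"
  by (simp add: is_compact_nilspace_def nilspace_def)

theorem mainTheorem12:
  fixes CX :: "('a::metric_space) cubes" and CY :: "('b::metric_space) cubes"
    and CY' :: "('c::metric_space) cubes"
    and k :: nat and \<psi> :: "'a \<Rightarrow> 'b" and R :: "'a \<Rightarrow> 'c" and x y :: 'a
  assumes "is_compact_nilspace CX" and "is_k_step k CX"
    and "is_compact_nilspace CY" and "is_compact_nilspace CY'"
    and "fibration CX CY \<psi>" and "fibration CX CY' R"
    and "\<forall>a b. R a = R b \<longrightarrow> \<psi> a = \<psi> b"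
    and "Delta \<psi> (induced_map CX CY' (k - 1) R \<circ> char_proj CX (k - 1)) x
       = Delta \<psi> (induced_map CX CY' (k - 1) R \<circ> char_proj CX (k - 1)) y"
  shows "\<exists>z\<in>struct_kernel CX CY k \<psi>. R x = R (struct_act CX k z y)"
proof -
  have X: "nilspace CX" and Y: "nilspace CY"
    using assms(1,3) by (simp_all add: nilspace_if_compact_nilspace)
  have "\<psi> x = \<psi> y"
    and "induced_map CX CY' (k - 1) R (char_proj CX (k - 1) x)
       = induced_map CX CY' (k - 1) R (char_proj CX (k - 1) y)"
    using assms(8) by (simp_all add: Delta_def)
  then obtain y' where y': "char_rel CX (k - 1) y y'" "R y' = R x"
    using char_rel_of_induced_map_eq[OF X assms(6)] by blast
  then have "\<psi> y' = \<psi> y"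
    using assms(7) \<open>\<psi> x = \<psi> y\<close> by metis
  have "struct_class CX k (y, y') \<in> struct_kernel CX CY k \<psi>"
    using assms(5) struct_class_mem_struct_kernel[OF X Y _ y'(1) \<open>\<psi> y' = \<psi> y\<close>]
    by (simp add: fibration_def)
  moreover have "struct_act CX k (struct_class CX k (y, y')) y = y'"
    using nilspace.struct_act_class[OF X assms(2) y'(1)] .
  ultimately show ?thesis
    using y'(2) by metis
qed

end
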